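(* Let $c>1$ be an irrational number, let $d=\{c\}^{-1}$, let $c'_n=[c^{-1}n]$, and define $$f(n)=[c^{-1}(n+1)]-[c^{-1}n],\qquad g(n)=[\{c\}(n+1)]-[\{c\}n].$$ Let $k$ be a nonnegative integer, and for a positive integer $m$ let $x=[mc]$. Then, as $m\to\infty$, \begin{align*} \sum_{n=1}^x \frac{f(n)g([\frac{n}{c}]+k+1)}{n} =\;& \frac{\{c\}}{c}+(cd)^{-1}(\log m + \log c + \gamma)+\{d^{-1}(1+k)\}\\ &- \sum_{n=1}^\infty \frac{d^{-1}\{c^{-1}(n+1)\}+\{d^{-1}(c'_{n+1}+k+1)\}}{n(n+1)} + O\left(\frac{1}{m}\right), \end{align*} where $\gamma$ is Euler's constant.
   Context: $[x]$ is the greatest integer not exceeding $x$ and $\{x\}=x-[x]$. The function $f$ is the indicator of $\{[cj]:j\ge1\}$ and $g$ is the indicator of $\{[dj]:j\ge1\}$. The implied constant may depend on $c$ and $k$. *)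

theory Defs
  imports "HOL-Analysis.Analysis" "HOL-Library.Landau_Symbols"
begin

definition ff :: "real \<Rightarrow> int \<Rightarrow> real" where
  "ff c n = of_int (\<lfloor>(of_int n + 1) / c\<rfloor> - \<lfloor>of_int n / c\<rfloor>)"

definition gg :: "real \<Rightarrow> int \<Rightarrow> real" where
  "gg c n = of_int (\<lfloor>frac c * (of_int n + 1)\<rfloor> - \<lfloor>frac c * of_int n\<rfloor>)"

definition cprime :: "real \<Rightarrow> int \<Rightarrow> int" where
  "cprime c n = \<lfloor>of_int n / c\<rfloor>"

end

theory Submission
  imports Defs
begin

text \<open>Since \<open>c > 1\<close>, the difference \<open>[(n+1)/c] - [n/c]\<close> is 0 or 1, so
  \<open>f(n) g([n/c]+k+1) = P(n+1) - P(n)\<close> with \<open>P(m) = [{c}([m/c]+k+1)]\<close>. Writing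
  \<open>[m/c] = m/c - {m/c}\<close> gives \<open>P(m) = ({c}/c) m + {c}(k+1) - E(m)\<close> with \<open>0 \<le> E(m) \<le> 2\<close>.
  Summation by parts of \<open>(P(n+1) - P(n))/n\<close> therefore produces \<open>({c}/c) H\<^sub>x + E(1)\<close> minus
  the convergent series \<open>\<Sum> E(n+1)/(n(n+1))\<close>, up to a boundary term and a series tail that are both
  \<open>O(1/x)\<close>; finally \<open>H\<^sub>x = ln x + \<gamma> + O(1/x)\<close> and \<open>x = [mc] = mc + O(1)\<close>.\<close>

lemma floor_succ_divide_cases:
  fixes x c :: real
  assumes "c \<ge> 1"
  shows "\<lfloor>(x + 1) / c\<rfloor> = \<lfloor>x / c\<rfloor> \<or> \<lfloor>(x + 1) / c\<rfloor> = \<lfloor>x / c\<rfloor> + 1"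
proof -
  have split: "(x + 1) / c = x / c + 1 / c" by (simp add: add_divide_distrib)
  have step: "0 < 1 / c" "1 / c \<le> 1" using assms by auto
  have "\<lfloor>x / c\<rfloor> \<le> \<lfloor>(x + 1) / c\<rfloor>"
    unfolding split using step by (intro floor_mono) simp
  moreover have "(x + 1) / c < of_int (\<lfloor>x / c\<rfloor> + 2)"
    unfolding split using step by linarith
  then have "\<lfloor>(x + 1) / c\<rfloor> < \<lfloor>x / c\<rfloor> + 2" by (simp add: floor_less_iff)
  ultimately show ?thesis by linarith
qed

definition beatty_count :: "real \<Rightarrow> nat \<Rightarrow> nat \<Rightarrow> real" where
  "beatty_count c k m = of_int \<lfloor>frac c * (of_int \<lfloor>real m / c\<rfloor> + real k + 1)\<rfloor>"

definition beatty_error :: "real \<Rightarrow> nat \<Rightarrow> nat \<Rightarrow> real" where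
  "beatty_error c k m =
     frac c * frac (real m / c) + frac (frac c * (of_int \<lfloor>real m / c\<rfloor> + real k + 1))"

lemma ff_gg_eq_beatty_count_diff:
  assumes "c \<ge> 1"
  shows "ff c (int n) * gg c (\<lfloor>real n / c\<rfloor> + int k + 1)
    = beatty_count c k (Suc n) - beatty_count c k n"
  using floor_succ_divide_cases[OF assms, of "real n"]
  by (elim disjE) (simp_all add: ff_def gg_def beatty_count_def add.commute algebra_simps)

lemma beatty_count_eq:
  "beatty_count c k m = frac c / c * real m + frac c * (real k + 1) - beatty_error c k m"
  by (cases "c = 0") (simp_all add: beatty_count_def beatty_error_def frac_def field_simps)

lemma beatty_error_nonneg: "0 \<le> beatty_error c k m"
  by (simp add: beatty_error_def)

lemma beatty_error_le_2: "beatty_error c k m \<le> 2"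
proof -
  have "frac c * frac (real m / c) \<le> 1 * 1"
    by (intro mult_mono) (auto simp: less_imp_le[OF frac_lt_1])
  moreover have "frac (frac c * (of_int \<lfloor>real m / c\<rfloor> + real k + 1)) < 1"
    by (rule frac_lt_1)
  ultimately show ?thesis by (simp add: beatty_error_def)
qed

lemma beatty_error_1:
  assumes "c > 1"
  shows "beatty_error c k 1 = frac c / c + frac (frac c * (1 + real k))"
proof -
  have floor: "\<lfloor>1 / c\<rfloor> = 0" using assms by (simp add: floor_eq_iff)
  then have "frac (1 / c) = 1 / c" by (simp add: frac_def)
  with floor show ?thesis by (simp add: beatty_error_def algebra_simps)
qed

lemma sum_diff_divide_by_parts:
  fixes h :: "nat \<Rightarrow> real"
  shows "(\<Sum>n<x. (h (Suc (Suc n)) - h (Suc n)) / real (Suc n))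
    = h (Suc x) / real (Suc x) - h 1
      + (\<Sum>n<x. h (Suc (Suc n)) / (real (Suc n) * (real (Suc n) + 1)))"
proof (induction x)
  case (Suc x)
  have "u / (a + 1) - v / a + u / (a * (a + 1)) = (u - v) / a" if "a > 0" for u v a :: real
    using that by (simp add: divide_simps) (simp add: algebra_simps)
  from this[of "real (Suc x)" "h (Suc (Suc x))" "h (Suc x)"] Suc show ?case by simp
qed simp

lemma sum_ff_gg_eq:
  assumes "c \<ge> 1"
  shows "(\<Sum>n = 1..x. ff c (int n) * gg c (\<lfloor>real n / c\<rfloor> + int k + 1) / real n)
    = frac c / c * harm x - beatty_error c k (Suc x) / real (Suc x) + beatty_error c k 1
      - (\<Sum>n<x. beatty_error c k (Suc (Suc n)) / (real (Suc n) * (real (Suc n) + 1)))"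
proof -
  have step: "ff c (int (Suc n)) * gg c (\<lfloor>real (Suc n) / c\<rfloor> + int k + 1)
    = frac c / c - (beatty_error c k (Suc (Suc n)) - beatty_error c k (Suc n))" for n
    using assms unfolding ff_gg_eq_beatty_count_diff[OF assms]
    by (simp add: beatty_count_eq field_simps)
  have summand: "ff c (int (Suc n)) * gg c (\<lfloor>real (Suc n) / c\<rfloor> + int k + 1) / real (Suc n)
    = frac c / c * inverse (real (Suc n))
      - (beatty_error c k (Suc (Suc n)) - beatty_error c k (Suc n)) / real (Suc n)" for n
    by (subst step) (simp add: divide_inverse algebra_simps)
  have "(\<Sum>n = 1..x. ff c (int n) * gg c (\<lfloor>real n / c\<rfloor> + int k + 1) / real n)
    = (\<Sum>n<x. frac c / c * inverse (real (Suc n))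
        - (beatty_error c k (Suc (Suc n)) - beatty_error c k (Suc n)) / real (Suc n))"
    by (simp only: One_nat_def sum.atLeast1_atMost_eq summand)
  also have "\<dots> = frac c / c * harm x
    - (\<Sum>n<x. (beatty_error c k (Suc (Suc n)) - beatty_error c k (Suc n)) / real (Suc n))"
    by (simp add: sum_subtractf sum_distrib_left harm_altdef)
  finally show ?thesis
    by (simp only: sum_diff_divide_by_parts)
qed

lemma telescoping_tail_sums:
  "(\<lambda>n. 1 / (real (Suc (n + x)) * (real (Suc (n + x)) + 1))) sums (1 / real (Suc x))"
proof -
  have "(\<lambda>n. inverse (real (Suc (n + x)))) \<longlonglongrightarrow> 0"
    by (rule LIMSEQ_ignore_initial_segment[OF LIMSEQ_inverse_real_of_nat])
  from telescope_sums'[OF this] show ?thesis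
    by (simp add: field_simps)
qed

lemma tail_bound_by_telescoping:
  fixes T :: "nat \<Rightarrow> real"
  assumes nonneg: "\<And>n. 0 \<le> T n"
    and le: "\<And>n. T n \<le> M / (real (Suc n) * (real (Suc n) + 1))"
  shows "summable T" and "0 \<le> suminf T - (\<Sum>n<x. T n)"
    and "suminf T - (\<Sum>n<x. T n) \<le> M / real (Suc x)"
proof -
  have majorant: "(\<lambda>n. M / (real (Suc (n + x)) * (real (Suc (n + x)) + 1))) sums (M / real (Suc x))"
    for x using sums_mult[OF telescoping_tail_sums[of x], of M] by simp
  show summable: "summable T"
    using majorant[of 0] nonneg le
    by (intro summable_comparison_test[of T, OF _ sums_summable]) auto
  have tail: "suminf T - (\<Sum>n<x. T n) = (\<Sum>n. T (n + x))"
    using suminf_split_initial_segment[OF summable, of x] by simp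
  have sums: "(\<lambda>n. T (n + x)) sums (\<Sum>n. T (n + x))"
    using summable_ignore_initial_segment[OF summable] by (rule summable_sums)
  show "0 \<le> suminf T - (\<Sum>n<x. T n)"
    unfolding tail using sums_summable[OF sums] nonneg by (rule suminf_nonneg)
  show "suminf T - (\<Sum>n<x. T n) \<le> M / real (Suc x)"
    unfolding tail
  proof (rule sums_le[OF _ sums majorant])
    show "T (n + x) \<le> M / (real (Suc (n + x)) * (real (Suc (n + x)) + 1))" for n
      using le[of "n + x"] by simp
  qed
qed

lemma abs_harm_minus_ln_minus_euler_mascheroni_le:
  assumes "N > 0"
  shows "\<bar>harm N - ln (real N) - euler_mascheroni\<bar> \<le> 1 / real N"
proof -
  obtain n where N: "N = Suc n" using assms by (cases N) auto
  have lower: "harm N - ln (real N + 1) + 1 / real (2 * (n + 2)) \<le> euler_mascheroni"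
    using euler_mascheroni_lower[of n] unfolding N by (simp add: add_ac)
  have "0 \<le> 1 / real (2 * (n + 2))" by simp
  have upper: "euler_mascheroni \<le> harm N - ln (real N + 1) + 1 / real N"
    using euler_mascheroni_upper[of n] unfolding N by (simp add: add_ac field_simps)
  have "ln (real N + 1) - ln (real N) < 1 / real N"
    using ln_diff_le_inverse[of "real N"] assms by simp
  moreover have "ln (real N) \<le> ln (real N + 1)" using assms by simp
  ultimately show ?thesis using lower upper \<open>0 \<le> 1 / real (2 * (n + 2))\<close> by linarith
qed

lemma abs_harm_floor_minus_ln_minus_euler_mascheroni_le:
  fixes y :: real
  assumes "y \<ge> 1"
  shows "\<bar>harm (nat \<lfloor>y\<rfloor>) - ln y - euler_mascheroni\<bar> \<le> 2 / real (nat \<lfloor>y\<rfloor>)"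
proof -
  define N where "N = nat \<lfloor>y\<rfloor>"
  have N: "real N \<le> y" "y < real N + 1" "real N \<ge> 1"
    using assms by (auto simp: N_def)
  have "ln (real N) \<le> ln y" using N by simp
  moreover have "ln y \<le> ln (real N + 1)" using N by simp
  moreover have "ln (real N + 1) - ln (real N) < 1 / real N"
    using ln_diff_le_inverse[of "real N"] N by simp
  moreover have "\<bar>harm N - ln (real N) - euler_mascheroni\<bar> \<le> 1 / real N"
    using N by (intro abs_harm_minus_ln_minus_euler_mascheroni_le) simp
  ultimately show ?thesis unfolding N_def[symmetric] by linarith
qed

lemma sum_ff_gg_estimate:
  assumes c: "c > 1" and m: "m \<ge> 1"
  shows "\<bar>(\<Sum>n = 1..nat \<lfloor>real m * c\<rfloor>. ff c (int n) * gg c (\<lfloor>real n / c\<rfloor> + int k + 1) / real n)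
      - (beatty_error c k 1 + frac c / c * (ln (real m * c) + euler_mascheroni)
         - (\<Sum>n. beatty_error c k (Suc (Suc n)) / (real (Suc n) * (real (Suc n) + 1))))\<bar>
    \<le> 6 / real m"
proof -
  define x where "x = nat \<lfloor>real m * c\<rfloor>"
  define T where "T n = beatty_error c k (Suc (Suc n)) / (real (Suc n) * (real (Suc n) + 1))" for n
  define R where "R = suminf T - (\<Sum>n<x. T n)"
  define a where "a = frac c / c"
  have "real m \<le> real m * c" using c m by simp
  then have "int m \<le> \<lfloor>real m * c\<rfloor>" by (simp add: le_floor_iff)
  then have mx: "real m \<le> real x" unfolding x_def by linarith
  have m0: "real m > 0" using m by simp
  have a: "0 \<le> a" "a \<le> 1"
    using c frac_lt_1[of c] by (auto simp: a_def field_simps)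
  have "1 \<le> real m * c" using \<open>real m \<le> real m * c\<close> m by linarith
  then have harm_approx: "\<bar>harm x - ln (real m * c) - euler_mascheroni\<bar> \<le> 2 / real x"
    unfolding x_def by (rule abs_harm_floor_minus_ln_minus_euler_mascheroni_le)
  have shrink: "2 / real (Suc x) \<le> 2 / real x" using mx m0 by (intro divide_left_mono) auto
  have "\<bar>a * (harm x - ln (real m * c) - euler_mascheroni)\<bar> \<le> 1 * (2 / real x)"
    unfolding abs_mult using a harm_approx by (intro mult_mono) auto
  moreover have "0 \<le> beatty_error c k (Suc x) / real (Suc x)"
    by (simp add: beatty_error_nonneg)
  moreover have "beatty_error c k (Suc x) / real (Suc x) \<le> 2 / real (Suc x)"
    by (intro divide_right_mono) (simp_all add: beatty_error_le_2)
  moreover have "0 \<le> R" "R \<le> 2 / real x"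
  proof -
    have "0 \<le> T n" "T n \<le> 2 / (real (Suc n) * (real (Suc n) + 1))" for n
      unfolding T_def using beatty_error_nonneg beatty_error_le_2
      by (auto intro: divide_right_mono)
    from tail_bound_by_telescoping(2,3)[where M = 2, OF this, of x]
    show "0 \<le> R" "R \<le> 2 / real x" using shrink unfolding R_def by auto
  qed
  moreover have "(\<Sum>n = 1..x. ff c (int n) * gg c (\<lfloor>real n / c\<rfloor> + int k + 1) / real n)
      - (beatty_error c k 1 + a * (ln (real m * c) + euler_mascheroni) - suminf T)
    = a * (harm x - ln (real m * c) - euler_mascheroni)
      - beatty_error c k (Suc x) / real (Suc x) + R"
    unfolding sum_ff_gg_eq[OF less_imp_le[OF c]] a_def R_def T_def by (simp add: algebra_simps)
  ultimately have "\<bar>(\<Sum>n = 1..x. ff c (int n) * gg c (\<lfloor>real n / c\<rfloor> + int k + 1) / real n)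
      - (beatty_error c k 1 + a * (ln (real m * c) + euler_mascheroni) - suminf T)\<bar> \<le> 3 * (2 / real x)"
    using shrink by linarith
  also have "\<dots> \<le> 6 / real m" using mx m0 by (simp add: divide_left_mono)
  finally show ?thesis unfolding x_def a_def T_def .
qed

theorem lemma12:
  fixes c :: real and k :: nat
  assumes "c > 1" and "c \<notin> \<rat>"
  defines "d \<equiv> inverse (frac c)"
  shows "(\<lambda>m::nat.
      (\<Sum>n = 1..nat \<lfloor>real m * c\<rfloor>.
          ff c (int n) * gg c (\<lfloor>real n / c\<rfloor> + int k + 1) / real n)
    - (frac c / c + inverse (c * d) * (ln (real m) + ln c + euler_mascheroni)
       + frac (inverse d * (1 + real k))
       - (\<Sum>n. (inverse d * frac ((real (Suc n) + 1) / c)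
                 + frac (inverse d * (of_int (cprime c (int (Suc n) + 1)) + real k + 1)))
               / (real (Suc n) * (real (Suc n) + 1)))))
    \<in> O(\<lambda>m. 1 / real m)"
  \<comment> \<open>The estimate holds for every \<open>c > 1\<close>.\<close>
proof -
  have series: "(inverse d * frac ((real (Suc n) + 1) / c)
      + frac (inverse d * (of_int (cprime c (int (Suc n) + 1)) + real k + 1)))
    = beatty_error c k (Suc (Suc n))" for n
    by (simp add: d_def beatty_error_def cprime_def add_ac)
  have main: "frac c / c + inverse (c * d) * (ln (real m) + ln c + euler_mascheroni)
      + frac (inverse d * (1 + real k))
    = beatty_error c k 1 + frac c / c * (ln (real m * c) + euler_mascheroni)" if "m \<ge> 1" for m
    using assms(1) that beatty_error_1[OF assms(1), of k]
    by (simp add: d_def ln_mult divide_inverse algebra_simps)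
  show ?thesis
    unfolding series
    using sum_ff_gg_estimate[OF assms(1), of _ k]
    by (intro bigoI[where c = 6] eventually_mono[OF eventually_ge_at_top[of 1]]) (subst main; simp)
qed

end
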